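(* Let $\mathfrak{s}$ be a finite-dimensional complex solvable Lie algebra. There is a Zariski closed subset $W\subseteq\mathrm{Hom}(\mathfrak{s},\mathfrak{sl}_2)$ with $0\notin W$ such that $\mathrm{rep}(\mathfrak{s},\mathfrak{sl}_2)\subseteq\mathrm{rep}^1(\mathfrak{s},\mathfrak{sl}_2)\cup W$. In particular, $\mathrm{rep}(\mathfrak{s},\mathfrak{sl}_2)_{(0)}=\mathrm{rep}^1(\mathfrak{s},\mathfrak{sl}_2)_{(0)}$.
   Context: $\mathrm{rep}(\mathfrak{s},\mathfrak{sl}_2)\subseteq\mathrm{Hom}(\mathfrak{s},\mathfrak{sl}_2)$ is the variety of Lie algebra homomorphisms, $\mathrm{rep}^1(\mathfrak{s},\mathfrak{sl}_2)$ the subset of those of rank at most $1$, and $X_{(0)}$ the analytic germ at $0$. *)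

theory Defs
  imports "HOL-Analysis.Analysis"
begin

text \<open>A finite-dimensional complex Lie algebra s is modelled on C^n (n = CARD('n))
  with a chosen standard basis, together with a bracket.\<close>

definition lie_algebra :: "(complex^'n \<Rightarrow> complex^'n \<Rightarrow> complex^'n) \<Rightarrow> bool" where
  "lie_algebra br \<longleftrightarrow>
     (\<forall>x y z. br (x + y) z = br x z + br y z) \<and>
     (\<forall>c x y. br (c *s x) y = c *s br x y) \<and>
     (\<forall>x y z. br x (y + z) = br x y + br x z) \<and>
     (\<forall>c x y. br x (c *s y) = c *s br x y) \<and>
     (\<forall>x. br x x = 0) \<and>
     (\<forall>x y z. br x (br y z) + br y (br z x) + br z (br x y) = 0)"

text \<open>Linear span of all brackets [x,y] with x,y in A (closure under sums suffices,
  since the bracket is bilinear).\<close>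
inductive_set bracket_sums :: "('v::{zero,plus} \<Rightarrow> 'v \<Rightarrow> 'v) \<Rightarrow> 'v set \<Rightarrow> 'v set"
  for br A where
  bs_zero: "0 \<in> bracket_sums br A"
| bs_br: "x \<in> A \<Longrightarrow> y \<in> A \<Longrightarrow> br x y \<in> bracket_sums br A"
| bs_add: "u \<in> bracket_sums br A \<Longrightarrow> v \<in> bracket_sums br A \<Longrightarrow> u + v \<in> bracket_sums br A"

primrec derived_series :: "('v::{zero,plus} \<Rightarrow> 'v \<Rightarrow> 'v) \<Rightarrow> nat \<Rightarrow> 'v set" where
  "derived_series br 0 = UNIV"
| "derived_series br (Suc k) = bracket_sums br (derived_series br k)"

definition solvable_lie :: "('v::{zero,plus} \<Rightarrow> 'v \<Rightarrow> 'v) \<Rightarrow> bool" where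
  "solvable_lie br \<longleftrightarrow> (\<exists>k. derived_series br k = {0})"

definition sl2 :: "(complex^2^2) set" where
  "sl2 = {A. trace A = 0}"

definition msc :: "complex \<Rightarrow> complex^2^2 \<Rightarrow> complex^2^2" where
  "msc c A = (\<chi> i j. c * A $ i $ j)"

definition mbr :: "complex^2^2 \<Rightarrow> complex^2^2 \<Rightarrow> complex^2^2" where
  "mbr A B = A ** B - B ** A"

text \<open>Hom(s, sl_2): a linear map is given by the images of the basis vectors.\<close>
definition hom_space :: "('n::finite \<Rightarrow> complex^2^2) set" where
  "hom_space = {\<phi>. \<forall>i. \<phi> i \<in> sl2}"

definition lin_of :: "('n::finite \<Rightarrow> complex^2^2) \<Rightarrow> complex^'n \<Rightarrow> complex^2^2" where
  "lin_of \<phi> x = (\<Sum>i\<in>UNIV. msc (x $ i) (\<phi> i))"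

definition rep_var :: "(complex^'n \<Rightarrow> complex^'n \<Rightarrow> complex^'n) \<Rightarrow> ('n::finite \<Rightarrow> complex^2^2) set" where
  "rep_var br = {\<phi> \<in> hom_space. \<forall>x y. lin_of \<phi> (br x y) = mbr (lin_of \<phi> x) (lin_of \<phi> y)}"

definition rank_le1 :: "('n::finite \<Rightarrow> complex^2^2) \<Rightarrow> bool" where
  "rank_le1 \<phi> \<longleftrightarrow> (\<exists>A. \<forall>x. \<exists>c. lin_of \<phi> x = msc c A)"

definition rep1_var :: "(complex^'n \<Rightarrow> complex^'n \<Rightarrow> complex^'n) \<Rightarrow> ('n::finite \<Rightarrow> complex^2^2) set" where
  "rep1_var br = {\<phi> \<in> rep_var br. rank_le1 \<phi>}"

inductive_set poly_fun :: "(('n::finite \<Rightarrow> complex^2^2) \<Rightarrow> complex) set" where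
  pf_const: "(\<lambda>\<phi>. c) \<in> poly_fun"
| pf_coord: "(\<lambda>\<phi>. \<phi> i $ a $ b) \<in> poly_fun"
| pf_add: "p \<in> poly_fun \<Longrightarrow> q \<in> poly_fun \<Longrightarrow> (\<lambda>\<phi>. p \<phi> + q \<phi>) \<in> poly_fun"
| pf_mult: "p \<in> poly_fun \<Longrightarrow> q \<in> poly_fun \<Longrightarrow> (\<lambda>\<phi>. p \<phi> * q \<phi>) \<in> poly_fun"

definition zariski_closed :: "('n::finite \<Rightarrow> complex^2^2) set \<Rightarrow> bool" where
  "zariski_closed W \<longleftrightarrow> (\<exists>P \<subseteq> poly_fun. W = {\<phi> \<in> hom_space. \<forall>p\<in>P. p \<phi> = 0})"

end

theory Submission
  imports Defs
begin

text \<open>Let \<phi> be a representation of the solvable Lie algebra s in sl_2 whose image is not a line.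
  Let m be the last index with \<phi>(s^(m)) \<noteq> 0. Then \<phi>(s^(m+1)) = 0, so \<phi>(s^(m)) is a commutative
  subalgebra of sl_2, i.e. a line \<complex>N. As s^(m) is an ideal, every basis vector e_k satisfies
  [\<phi>(e_k), N] = l_k N, and some l_k \<noteq> 0, since otherwise all \<phi>(e_k) would commute with N and
  \<phi> would have rank at most 1. In sl_2 this forces l_k^2 = 2 tr(\<phi>(e_k)^2), and pulling the relation
  back along \<phi> shows that l_k is an eigenvalue of ad(e_k). Hence \<phi> is a zero of the polynomial
  \<Prod>_k \<Prod>_\<mu> (2 tr(\<phi>(e_k)^2) - \<mu>^2), with \<mu> ranging over the finitely many nonzero eigenvalues
  of ad(e_k); this polynomial does not vanish at \<phi> = 0.\<close>

lemma mat2_eq_iff: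
  "(A::'a^2^2) = B \<longleftrightarrow> A$1$1 = B$1$1 \<and> A$1$2 = B$1$2 \<and> A$2$1 = B$2$1 \<and> A$2$2 = B$2$2"
  by (auto simp: vec_eq_iff forall_2)

lemma matrix_mult_2_nth: "((A::'a::semiring_1^2^2) ** B)$i$j = A$i$1*B$1$j + A$i$2*B$2$j"
  by (simp add: matrix_matrix_mult_def sum_2)

lemma trace_2: "trace (A::'a::semiring_1^2^2) = A$1$1 + A$2$2"
  by (simp add: trace_def sum_2)

lemma msc_nth [simp]: "msc c A $ i $ j = c * A $ i $ j"
  by (simp add: msc_def)

lemma msc_zero_left [simp]: "msc 0 A = 0"
  by (simp add: vec_eq_iff)

lemma msc_zero_right [simp]: "msc c 0 = 0"
  by (simp add: vec_eq_iff)

lemma mbr_antisym: "mbr A B = - mbr B A"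
  by (simp add: mbr_def)

lemma sl2_centralizer:
  assumes "trace M = 0" "trace N = 0" "N \<noteq> 0" "mbr M N = 0"
  shows "\<exists>c. M = msc c N"
proof -
  have tr: "M$2$2 = - M$1$1" "N$2$2 = - N$1$1"
    using assms(1,2) by (auto simp: trace_2 add_eq_0_iff)
  have e: "mbr M N $i$j = 0" for i j using assms(4) by simp
  from e[of 1 1] e[of 1 2] e[of 2 1] have a: "M$1$2 * N$2$1 = N$1$2 * M$2$1"
    and b: "M$1$1 * N$1$2 = M$1$2 * N$1$1"
    and c: "M$2$1 * N$1$1 = M$1$1 * N$2$1"
    by (auto simp: mbr_def matrix_mult_2_nth tr algebra_simps)
  have "N$1$1 \<noteq> 0 \<or> N$1$2 \<noteq> 0 \<or> N$2$1 \<noteq> 0"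
    using assms(3) tr by (auto simp: mat2_eq_iff)
  then consider "N$1$1 \<noteq> 0" | "N$1$1 = 0" "N$1$2 \<noteq> 0" | "N$1$1 = 0" "N$1$2 = 0" "N$2$1 \<noteq> 0"
    by blast
  then show ?thesis
  proof cases
    case 1
    show ?thesis
      by (rule exI[of _ "M$1$1 / N$1$1"]) (use 1 a b c tr in \<open>auto simp: mat2_eq_iff field_simps\<close>)
  next
    case 2
    show ?thesis
      by (rule exI[of _ "M$1$2 / N$1$2"]) (use 2 a b c tr in \<open>auto simp: mat2_eq_iff field_simps\<close>)
  next
    case 3
    show ?thesis
      by (rule exI[of _ "M$2$1 / N$2$1"]) (use 3 a b c tr in \<open>auto simp: mat2_eq_iff field_simps\<close>)
  qed
qed

text \<open>The nonzero eigenvalues of ad A on sl_2 are \<plusminus>2a, where \<plusminus>a are the eigenvalues of A,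
  and 2 tr(A^2) = 4a^2.\<close>
lemma sl2_ad_eigenvalue_square:
  assumes "trace A = 0" "trace N = 0" "N \<noteq> 0" "mbr A N = msc l N" "l \<noteq> 0"
  shows "l^2 = 2 * trace (A ** A)"
proof -
  have tr: "A$2$2 = - A$1$1" "N$2$2 = - N$1$1"
    using assms(1,2) by (auto simp: trace_2 add_eq_0_iff)
  obtain p q r u v w where
    d: "p = A$1$1" "q = A$1$2" "r = A$2$1" "u = N$1$1" "v = N$1$2" "w = N$2$1"
    by simp
  have e: "mbr A N $i$j = l * N$i$j" for i j using assms(4) by simp
  from e[of 1 1] e[of 1 2] e[of 2 1] have a: "q * w - v * r = l * u" and b: "2 * (p * v - q * u) = l * v"
    and c: "2 * (r * u - p * w) = l * w"
    by (auto simp: mbr_def matrix_mult_2_nth tr algebra_simps d)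
  have "u \<noteq> 0 \<or> v \<noteq> 0 \<or> w \<noteq> 0" using assms(3) tr d by (auto simp: mat2_eq_iff)
  moreover have "(l^2 - 4 * (p^2 + q * r)) * l * u = 0"
    and "(l^2 - 4 * (p^2 + q * r)) * l * v = 0"
    and "(l^2 - 4 * (p^2 + q * r)) * l * w = 0"
    using a b c by algebra+
  ultimately have "l^2 = 4 * (p^2 + q * r)" using assms(5) by auto
  then show ?thesis
    by (simp add: trace_2 matrix_mult_2_nth tr d power2_eq_square algebra_simps)
qed

lemma eigenvectors_independent:
  fixes f :: "'a::field^'n \<Rightarrow> 'a^'n"
  assumes lin: "Vector_Spaces.linear (*s) (*s) f"
    and "finite S" "\<forall>w\<in>S. w \<noteq> 0 \<and> f w = e w *s w" "inj_on e S"
  shows "vec.independent S"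
  using assms(2-)
proof (induction S rule: finite_induct)
  case empty
  then show ?case by (simp add: vec.independent_empty)
next
  case (insert a S)
  interpret f: Vector_Spaces.linear "(*s)" "(*s)" f by (rule lin)
  have indep: "vec.independent S" using insert by auto
  have "a \<notin> vec.span S"
  proof
    assume "a \<in> vec.span S"
    then obtain u where a: "a = (\<Sum>v\<in>S. u v *s v)"
      using vec.span_finite[OF insert(1)] by auto
    have "(\<Sum>v\<in>S. (u v * e v) *s v) = f a"
      unfolding a using insert(4) by (auto simp: f.sum f.scale intro: sum.cong)
    moreover have "(\<Sum>v\<in>S. (e a * u v) *s v) = f a"
      using insert(4) unfolding a by (simp add: vec.scale_sum_right)
    ultimately have "(\<Sum>v\<in>S. (u v * (e v - e a)) *s v) = 0"
      by (simp add: algebra_simps sum_subtractf)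
    then have "\<forall>v\<in>S. u v * (e v - e a) = 0"
      using vec.independentD[OF indep insert(1) subset_refl, of "\<lambda>v. u v * (e v - e a)"] by blast
    moreover have "\<forall>v\<in>S. e v \<noteq> e a" using insert(2,5) by (auto simp: inj_on_def)
    ultimately have "a = 0" unfolding a by simp
    then show False using insert(4) by auto
  qed
  then show ?case using indep vec.independent_insertI by blast
qed

lemma finite_eigenvalues:
  fixes f :: "'a::field^'n \<Rightarrow> 'a^'n"
  assumes lin: "Vector_Spaces.linear (*s) (*s) f"
  shows "finite {\<mu>. \<exists>v. v \<noteq> 0 \<and> f v = \<mu> *s v}" (is "finite ?E")
proof -
  define vec_of where "vec_of \<mu> = (SOME v. v \<noteq> 0 \<and> f v = \<mu> *s v)" for \<mu>
  have vec_of: "vec_of \<mu> \<noteq> 0 \<and> f (vec_of \<mu>) = \<mu> *s vec_of \<mu>" if "\<mu> \<in> ?E" for \<mu>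
    using someI_ex[of "\<lambda>v. v \<noteq> 0 \<and> f v = \<mu> *s v"] that by (simp add: vec_of_def)
  have "card G \<le> CARD('n)" if G: "G \<subseteq> ?E" "finite G" for G
  proof -
    have inj: "inj_on vec_of G"
    proof (rule inj_onI)
      fix x y assume "x \<in> G" "y \<in> G" and eq: "vec_of x = vec_of y"
      then have "x \<in> ?E" "y \<in> ?E" using G(1) by auto
      then have "x *s vec_of x = y *s vec_of x" "vec_of x \<noteq> 0"
        using vec_of[OF \<open>x \<in> ?E\<close>] vec_of[OF \<open>y \<in> ?E\<close>] eq by metis+
      then show "x = y" using vec.scale_cancel_right by blast
    qed
    have "vec.independent (vec_of ` G)"
    proof (rule eigenvectors_independent[OF lin])
      show "\<forall>w\<in>vec_of ` G. w \<noteq> 0 \<and> f w = the_inv_into G vec_of w *s w"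
      proof
        fix w assume "w \<in> vec_of ` G"
        then obtain \<mu> where "\<mu> \<in> G" "w = vec_of \<mu>" by blast
        moreover from this have "\<mu> \<in> ?E" using G(1) by blast
        ultimately show "w \<noteq> 0 \<and> f w = the_inv_into G vec_of w *s w"
          using vec_of the_inv_into_f_f[OF inj] by simp
      qed
    qed (use G inj in \<open>auto intro: inj_on_the_inv_into\<close>)
    then have "card (vec_of ` G) \<le> vec.dim (UNIV :: ('a^'n) set)"
      using vec.independent_bound_general vec.dim_subset[of "vec_of ` G" UNIV] by fastforce
    then show ?thesis using card_image[OF inj] by (simp add: card_cart_basis)
  qed
  then show ?thesis using finite_if_finite_subsets_card_bdd by blast
qed

text \<open>An injective endomorphism maps an invariant subspace onto itself, so a vector sent into the
  subspace from outside it witnesses a nontrivial kernel.\<close>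
lemma kernel_nonzero_if_maps_into_invariant_subspace:
  fixes T :: "'a::field^'n \<Rightarrow> 'a^'n"
  assumes lin: "Vector_Spaces.linear (*s) (*s) T" and K: "vec.subspace K" "T ` K \<subseteq> K"
    and z: "T z \<in> K" "z \<notin> K"
  shows "\<exists>v. v \<noteq> 0 \<and> T v = 0"
proof (rule ccontr)
  interpret T: Vector_Spaces.linear "(*s)" "(*s)" T by (rule lin)
  assume "\<nexists>v. v \<noteq> 0 \<and> T v = 0"
  then have inj: "inj T" by (auto simp: T.inj_iff_eq_0)
  have "vec.dim (T ` K) = vec.dim K"
    by (rule vec.dim_image_eq[OF lin]) (use inj in \<open>auto intro: inj_on_subset\<close>)
  then have "T ` K = K"
    using vec.subspace_dim_equal[OF T.subspace_image[OF K(1)] K] by simp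
  then obtain k where "k \<in> K" "T k = T z" using z(1) by (metis imageE)
  then show False using inj z(2) by (metis injD)
qed

context
  fixes br :: "complex^'n \<Rightarrow> complex^'n \<Rightarrow> complex^'n"
  assumes lie: "lie_algebra br"
begin

lemma lie_add_left: "br (x + y) z = br x z + br y z"
  using lie by (simp add: lie_algebra_def)

lemma lie_add_right: "br x (y + z) = br x y + br x z"
  using lie by (simp add: lie_algebra_def)

lemma lie_scale_right: "br x (c *s y) = c *s br x y"
  using lie by (simp add: lie_algebra_def)

lemma lie_jacobi: "br x (br y z) + br y (br z x) + br z (br x y) = 0"
  using lie by (simp add: lie_algebra_def)

lemma lie_linear_right: "Vector_Spaces.linear (*s) (*s) (br x)"
  by unfold_locales (simp_all add: lie_add_right lie_scale_right)

lemma lie_zero_right: "br x 0 = 0"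
proof -
  interpret Vector_Spaces.linear "(*s)" "(*s)" "br x" by (rule lie_linear_right)
  show ?thesis by (rule zero)
qed

lemma lie_minus_right: "br x (- y) = - br x y"
proof -
  interpret Vector_Spaces.linear "(*s)" "(*s)" "br x" by (rule lie_linear_right)
  show ?thesis by (rule neg)
qed

lemma lie_antisym: "br y x = - br x y"
proof -
  have "br (x + y) (x + y) = 0" using lie by (simp add: lie_algebra_def)
  then have "br y x + br x y = 0"
    using lie by (simp add: lie_add_left lie_add_right lie_algebra_def)
  then show ?thesis by (simp add: eq_neg_iff_add_eq_0)
qed

lemma lie_leibniz: "br x (br a b) = br a (br x b) + br (br x a) b"
proof -
  have "br a (br b x) = - br a (br x b)" by (simp add: lie_antisym[of x b] lie_minus_right)
  moreover have "br b (br x a) = - br (br x a) b" by (rule lie_antisym)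
  ultimately have "br x (br a b) + - br a (br x b) + - br (br x a) b = 0"
    using lie_jacobi[of x a b] by simp
  then show ?thesis by (simp add: eq_neg_iff_add_eq_0 algebra_simps)
qed

lemma derived_series_ideal: "u \<in> derived_series br m \<Longrightarrow> br x u \<in> derived_series br m"
proof (induction m arbitrary: u)
  case 0
  then show ?case by simp
next
  case (Suc m)
  from Suc.prems have "u \<in> bracket_sums br (derived_series br m)" by simp
  then have "br x u \<in> bracket_sums br (derived_series br m)"
  proof (induction rule: bracket_sums.induct)
    case bs_zero
    then show ?case by (simp add: lie_zero_right bracket_sums.bs_zero)
  next
    case (bs_br a b)
    then have "br a (br x b) \<in> bracket_sums br (derived_series br m)"
      and "br (br x a) b \<in> bracket_sums br (derived_series br m)"
      by (simp_all add: Suc.IH bracket_sums.bs_br)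
    then show ?case by (simp add: lie_leibniz[of x a b] bracket_sums.bs_add)
  next
    case (bs_add u v)
    then show ?case by (simp add: lie_add_right bracket_sums.bs_add)
  qed
  then show ?case by simp
qed

end

lemma lin_of_nth: "lin_of \<phi> x $ a $ b = (\<Sum>i\<in>UNIV. x $ i * \<phi> i $ a $ b)"
  by (simp add: lin_of_def)

lemma lin_of_zero: "lin_of \<phi> 0 = 0"
  by (simp add: vec_eq_iff lin_of_nth)

lemma lin_of_add: "lin_of \<phi> (x + y) = lin_of \<phi> x + lin_of \<phi> y"
  by (simp add: vec_eq_iff lin_of_nth algebra_simps sum.distrib)

lemma lin_of_diff: "lin_of \<phi> (x - y) = lin_of \<phi> x - lin_of \<phi> y"
  by (simp add: vec_eq_iff lin_of_nth algebra_simps sum_subtractf)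

lemma lin_of_scale: "lin_of \<phi> (c *s x) = msc c (lin_of \<phi> x)"
  by (simp add: vec_eq_iff lin_of_nth sum_distrib_left algebra_simps)

lemma lin_of_axis: "lin_of \<phi> (axis k 1) = \<phi> k"
proof -
  have "(\<Sum>i\<in>UNIV. axis k 1 $ i * \<phi> i $ a $ b) = (\<Sum>i\<in>UNIV. if i = k then \<phi> i $ a $ b else 0)"
    for a b by (intro sum.cong) (auto simp: axis_def)
  then have "(\<Sum>i\<in>UNIV. axis k 1 $ i * \<phi> i $ a $ b) = \<phi> k $ a $ b" for a b
    by simp
  then show ?thesis by (simp add: vec_eq_iff lin_of_nth)
qed

lemma trace_lin_of: "\<phi> \<in> hom_space \<Longrightarrow> trace (lin_of \<phi> x) = 0"
  by (simp add: hom_space_def sl2_def trace_2 lin_of_nth flip: sum.distrib distrib_left)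

lemma rank_le1_if_proportional: "(\<And>k. \<exists>c. \<phi> k = msc c N) \<Longrightarrow> rank_le1 \<phi>"
proof -
  assume "\<And>k. \<exists>c. \<phi> k = msc c N"
  then obtain c where c: "\<And>k. \<phi> k = msc (c k) N" by metis
  have "lin_of \<phi> x = msc (\<Sum>i\<in>UNIV. x $ i * c i) N" for x
    by (simp add: vec_eq_iff lin_of_nth c sum_distrib_right mult.assoc)
  then show ?thesis unfolding rank_le1_def by blast
qed

lemma poly_fun_prod:
  "finite S \<Longrightarrow> (\<And>s. s \<in> S \<Longrightarrow> f s \<in> poly_fun) \<Longrightarrow> (\<lambda>\<phi>. \<Prod>s\<in>S. f s \<phi>) \<in> poly_fun"
proof (induction S rule: finite_induct)
  case (insert s S)
  then have "(\<lambda>\<phi>. f s \<phi> * (\<Prod>s\<in>S. f s \<phi>)) \<in> poly_fun" by (intro poly_fun.pf_mult) auto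
  then show ?case using insert by simp
qed (simp add: poly_fun.pf_const)

lemma poly_fun_trace_square:
  fixes k :: "'n::finite"
  shows "(\<lambda>\<phi>. trace (\<phi> k ** \<phi> k)) \<in> poly_fun"
proof -
  have "(\<lambda>\<phi>. trace (\<phi> k ** \<phi> k)) = (\<lambda>\<phi>::'n::finite \<Rightarrow> complex^2^2.
    (\<phi> k$1$1 * \<phi> k$1$1 + \<phi> k$1$2 * \<phi> k$2$1) + (\<phi> k$2$1 * \<phi> k$1$2 + \<phi> k$2$2 * \<phi> k$2$2))"
    by (simp add: trace_2 matrix_mult_2_nth)
  also have "\<dots> \<in> poly_fun"
    by (intro poly_fun.pf_add poly_fun.pf_mult poly_fun.pf_coord)
  finally show ?thesis .
qed

lemma poly_fun_continuous: "p \<in> poly_fun \<Longrightarrow> continuous_on UNIV p"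
proof (induction rule: poly_fun.induct)
  case (pf_coord i a b)
  show ?case by (intro continuous_on_component continuous_on_product_coordinates)
qed (auto intro: continuous_on_add continuous_on_mult)

lemma zariski_closed_imp_closed:
  fixes W :: "('n::finite \<Rightarrow> complex^2^2) set"
  assumes "zariski_closed W"
  shows "closed W"
proof -
  obtain P where "P \<subseteq> poly_fun" and W: "W = {\<phi> \<in> hom_space. \<forall>p\<in>P. p \<phi> = 0}"
    using assms by (auto simp: zariski_closed_def)
  then have "W = {\<phi>. \<forall>i. \<phi> i $ 1 $ 1 + \<phi> i $ 2 $ 2 = 0} \<inter> (\<Inter>p\<in>P. {\<phi>. p \<phi> = 0})"
    by (auto simp: hom_space_def sl2_def trace_2)
  also have "closed \<dots>"
  proof (intro closed_Int closed_INT closed_Collect_all ballI)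
    show "closed {\<phi>::'n \<Rightarrow> complex^2^2. \<phi> i $ 1 $ 1 + \<phi> i $ 2 $ 2 = 0}" for i
      by (intro closed_Collect_eq continuous_intros continuous_on_component
          continuous_on_product_coordinates)
    show "closed {\<phi>. p \<phi> = 0}" if "p \<in> P" for p
      using that \<open>P \<subseteq> poly_fun\<close>
      by (intro closed_Collect_eq continuous_on_const) (auto intro: poly_fun_continuous)
  qed
  finally show ?thesis .
qed

lemma rep_last_nonvanishing_derived:
  assumes "solvable_lie br" "lin_of \<phi> x \<noteq> 0"
  obtains m u where "u \<in> derived_series br m" "lin_of \<phi> u \<noteq> 0"
    "\<And>v. v \<in> derived_series br (Suc m) \<Longrightarrow> lin_of \<phi> v = 0"
proof -
  define P where "P j \<longleftrightarrow> (\<exists>u\<in>derived_series br j. lin_of \<phi> u \<noteq> 0)" for j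
  obtain K where "derived_series br K = {0}" using assms(1) by (auto simp: solvable_lie_def)
  then have "\<not> P K" by (simp add: P_def lin_of_zero)
  moreover have "P 0" using assms(2) by (auto simp: P_def)
  ultimately have "\<exists>m. P m \<and> \<not> P (Suc m)" by (induction K) auto
  then show ?thesis using that by (auto simp: P_def)
qed

text \<open>The kernel of \<phi> is invariant under T = ad x - l, and T maps u into it.\<close>
lemma rep_eigenvector:
  assumes lie: "lie_algebra br" and rep: "\<phi> \<in> rep_var br"
    and eq: "lin_of \<phi> (br x u) = msc l (lin_of \<phi> u)" and nz: "lin_of \<phi> u \<noteq> 0"
  shows "\<exists>v. v \<noteq> 0 \<and> br x v = l *s v"
proof -
  have hom: "lin_of \<phi> (br a b) = mbr (lin_of \<phi> a) (lin_of \<phi> b)" for a b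
    using rep by (simp add: rep_var_def)
  define T where "T v = br x v - l *s v" for v
  have lin: "Vector_Spaces.linear (*s) (*s) T"
    by unfold_locales (simp_all add: T_def lie_add_right[OF lie] lie_scale_right[OF lie])
  define K where "K = {v. lin_of \<phi> v = 0}"
  have "vec.subspace K"
    unfolding vec.subspace_def K_def by (simp add: lin_of_zero lin_of_add lin_of_scale)
  moreover have "T ` K \<subseteq> K" "T u \<in> K" "u \<notin> K"
    using eq nz by (auto simp: K_def T_def lin_of_diff lin_of_scale hom mbr_def)
  ultimately obtain v where "v \<noteq> 0" "T v = 0"
    using kernel_nonzero_if_maps_into_invariant_subspace[OF lin] by blast
  then show ?thesis by (auto simp: T_def)
qed

definition ad_eigenvalues :: "(complex^'n \<Rightarrow> complex^'n \<Rightarrow> complex^'n) \<Rightarrow> 'n \<Rightarrow> complex set" where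
  "ad_eigenvalues br k = {\<mu>. \<mu> \<noteq> 0 \<and> (\<exists>v. v \<noteq> 0 \<and> br (axis k 1) v = \<mu> *s v)}"

lemma rep_not_rank_le1_ad_eigenvalue:
  assumes lie: "lie_algebra br" and "solvable_lie br"
    and rep: "\<phi> \<in> rep_var br" and not_rank1: "\<not> rank_le1 \<phi>"
  shows "\<exists>k. \<exists>l\<in>ad_eigenvalues br k. l^2 = 2 * trace (\<phi> k ** \<phi> k)"
proof -
  have hom: "\<phi> \<in> hom_space"
    and brk: "\<And>x y. lin_of \<phi> (br x y) = mbr (lin_of \<phi> x) (lin_of \<phi> y)"
    using rep by (auto simp: rep_var_def)
  have tr: "trace (\<phi> k) = 0" for k using hom by (simp add: hom_space_def sl2_def)
  have "\<exists>x. lin_of \<phi> x \<noteq> 0"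
    using not_rank1 unfolding rank_le1_def by (metis msc_zero_right)
  then obtain m u0 where u0: "u0 \<in> derived_series br m" "lin_of \<phi> u0 \<noteq> 0"
    and vanish: "\<And>v. v \<in> derived_series br (Suc m) \<Longrightarrow> lin_of \<phi> v = 0"
    using rep_last_nonvanishing_derived[OF \<open>solvable_lie br\<close>] by metis
  define N where "N = lin_of \<phi> u0"
  have trN: "trace N = 0" "N \<noteq> 0" using trace_lin_of[OF hom] u0(2) by (auto simp: N_def)
  have line: "\<exists>c. lin_of \<phi> v = msc c N" if "v \<in> derived_series br m" for v
  proof -
    have "mbr N (lin_of \<phi> v) = 0"
      using vanish[of "br u0 v"] u0(1) that by (simp add: bracket_sums.bs_br brk N_def)
    then show ?thesis
      using sl2_centralizer[OF trace_lin_of[OF hom] trN] mbr_antisym neg_equal_0_iff_equal by metis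
  qed
  have "\<exists>c. mbr (\<phi> k) N = msc c N" for k
    using line[OF derived_series_ideal[OF lie u0(1), of "axis k 1"]] by (simp add: brk lin_of_axis N_def)
  then obtain l where l: "\<And>k. mbr (\<phi> k) N = msc (l k) N" by metis
  have "\<exists>k. l k \<noteq> 0"
  proof (rule ccontr)
    assume "\<nexists>k. l k \<noteq> 0"
    then have "\<exists>c. \<phi> k = msc c N" for k
      using sl2_centralizer[OF tr trN] l[of k] by simp
    then show False using rank_le1_if_proportional not_rank1 by blast
  qed
  then obtain k where lk: "l k \<noteq> 0" by blast
  have "\<exists>v. v \<noteq> 0 \<and> br (axis k 1) v = l k *s v"
    using rep_eigenvector[OF lie rep _ u0(2)] l[of k] by (simp add: brk lin_of_axis N_def)
  moreover have "(l k)^2 = 2 * trace (\<phi> k ** \<phi> k)"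
    using sl2_ad_eigenvalue_square[OF tr trN l lk] .
  ultimately show ?thesis using lk by (auto simp: ad_eigenvalues_def)
qed

definition rank1_obstruction ::
    "(complex^'n \<Rightarrow> complex^'n \<Rightarrow> complex^'n) \<Rightarrow> ('n::finite \<Rightarrow> complex^2^2) \<Rightarrow> complex" where
  "rank1_obstruction br \<phi> = (\<Prod>k\<in>UNIV. \<Prod>\<mu>\<in>ad_eigenvalues br k. 2 * trace (\<phi> k ** \<phi> k) - \<mu>^2)"

lemma finite_ad_eigenvalues: "lie_algebra br \<Longrightarrow> finite (ad_eigenvalues br k)"
  unfolding ad_eigenvalues_def
  using finite_eigenvalues[OF lie_linear_right] by (rule rev_finite_subset) auto

lemma rank1_obstruction_poly_fun:
  fixes br :: "complex^'n \<Rightarrow> complex^'n \<Rightarrow> complex^'n"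
  assumes "lie_algebra br"
  shows "rank1_obstruction br \<in> poly_fun"
proof -
  have "(\<lambda>\<phi>. 2 * trace (\<phi> k ** \<phi> k) + - (\<mu>^2)) \<in> poly_fun" for k :: 'n and \<mu>
    using poly_fun.pf_mult[OF poly_fun.pf_const poly_fun_trace_square] poly_fun.pf_const
    by (rule poly_fun.pf_add)
  then show ?thesis
    unfolding rank1_obstruction_def diff_conv_add_uminus
    by (intro poly_fun_prod finite_ad_eigenvalues[OF assms] finite)
qed

lemma rank1_obstruction_zero: "lie_algebra br \<Longrightarrow> rank1_obstruction br (\<lambda>_. 0) \<noteq> 0"
  by (simp add: rank1_obstruction_def finite_ad_eigenvalues trace_2)
    (simp add: ad_eigenvalues_def)

lemma rank1_obstruction_vanishes:
  assumes "lie_algebra br" "solvable_lie br" "\<phi> \<in> rep_var br" "\<not> rank_le1 \<phi>"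
  shows "rank1_obstruction br \<phi> = 0"
proof -
  obtain k l where "l \<in> ad_eigenvalues br k" "l^2 = 2 * trace (\<phi> k ** \<phi> k)"
    using rep_not_rank_le1_ad_eigenvalue[OF assms] by blast
  then have "(\<Prod>\<mu>\<in>ad_eigenvalues br k. 2 * trace (\<phi> k ** \<phi> k) - \<mu>^2) = 0"
    by (intro prod_zero[OF finite_ad_eigenvalues[OF assms(1)]] bexI[of _ l]) simp_all
  then show ?thesis
    unfolding rank1_obstruction_def by (intro prod_zero[OF finite]) blast
qed

theorem lemma4p3:
  fixes br :: "complex^'n \<Rightarrow> complex^'n \<Rightarrow> complex^'n"
  assumes "lie_algebra br" and "solvable_lie br"
  shows "(\<exists>W. zariski_closed W \<and> (\<lambda>_. 0) \<notin> W \<and> rep_var br \<subseteq> rep1_var br \<union> W)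
       \<and> (\<exists>U. open U \<and> (\<lambda>_::'n. 0::complex^2^2) \<in> U \<and> rep_var br \<inter> U = rep1_var br \<inter> U)"
proof -
  define W where "W = {\<phi> \<in> hom_space. \<forall>p\<in>{rank1_obstruction br}. p \<phi> = 0}"
  have zariski: "zariski_closed W"
    unfolding zariski_closed_def W_def using rank1_obstruction_poly_fun[OF assms(1)] by blast
  have zero: "(\<lambda>_. 0) \<notin> W"
    using rank1_obstruction_zero[OF assms(1)] by (simp add: W_def)
  have cover: "rep_var br \<subseteq> rep1_var br \<union> W"
    using rank1_obstruction_vanishes[OF assms] by (auto simp: W_def rep1_var_def rep_var_def)
  show ?thesis
  proof (intro conjI exI)
    show "open (- W)" using zariski_closed_imp_closed[OF zariski] by (simp add: open_Compl)
    show "rep_var br \<inter> - W = rep1_var br \<inter> - W" using cover by (auto simp: rep1_var_def)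
  qed (use zariski zero cover in auto)
qed

end
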